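(* Assume the payoffs are normalized with $T=1$, $S=0$. Assume X uses a memory-one strategy $\mathbf p$ with $\mathbf p-(1,1,0,0)=\gamma(\bar\alpha\mathbf S_X+\bar\beta\mathbf S_Y+\mathbf 1)$, $\gamma>0$, and let $-Z^{-1}=\bar\alpha+\bar\beta$. Assume Y uses an arbitrary strategy pattern, and let $s_X,s_Y$ be the expected payoffs for any associated limit distribution. (a) If $\bar\alpha=0$ then $s_Y=Z$. If $\bar\alpha\neq0$ then the following are equivalent: (i) $s_Y=s_X$; (ii) $s_Y=Z$; (iii) $s_X=Z$. (b) If $s_Y>s_X$ then: $\bar\alpha>0\Rightarrow Z>s_Y>s_X$; $\bar\alpha=0\Rightarrow Z=s_Y>s_X$; $\bar\alpha<0\Rightarrow s_Y>Z>s_X$. (c) If $s_X>s_Y$ then: $\bar\alpha>0\Rightarrow s_X>s_Y>Z$; $\bar\alpha=0\Rightarrow s_X>s_Y=Z$; $\bar\alpha<0\Rightarrow s_X>Z>s_Y$.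
   Context: Iterated Prisoner's Dilemma with normalized payoffs $T=1>R>P>S=0$ and $2R>1$; outcomes ordered $cc,cd,dc,dd$ (first letter X's play, second Y's; $c$ = cooperate, $d$ = defect); payoff vectors $\mathbf S_X=(R,0,1,P)$, $\mathbf S_Y=(R,1,0,P)$, $\mathbf 1=(1,1,1,1)$. A memory-one strategy for X is $\mathbf p\in[0,1]^4$, $p_i$ the probability X plays $c$ after outcome $i$ of the previous round. A strategy pattern for Y is any (possibly randomized, history-dependent) rule for Y's play. With $\mathbf v^n$ the distribution of the outcome of round $n$, a limit distribution is any limit point $\mathbf v$ of the Cesàro averages $\frac1n\sum_{k\le n}\mathbf v^k$, with expected payoffs $s_X=\langle\mathbf v\cdot\mathbf S_X\rangle$, $s_Y=\langle\mathbf v\cdot\mathbf S_Y\rangle$. *)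

theory Defs
  imports Complex_Main
begin

text \<open>Outcomes of one round, ordered cc, cd, dc, dd (first letter: X's play).\<close>
datatype outcome = CC | CD | DC | DD

fun x_coop :: "outcome \<Rightarrow> bool" where
  "x_coop CC = True" | "x_coop CD = True" | "x_coop DC = False" | "x_coop DD = False"

fun y_coop :: "outcome \<Rightarrow> bool" where
  "y_coop CC = True" | "y_coop CD = False" | "y_coop DC = True" | "y_coop DD = False"

fun SX :: "real \<Rightarrow> real \<Rightarrow> outcome \<Rightarrow> real" where
  "SX R P CC = R" | "SX R P CD = 0" | "SX R P DC = 1" | "SX R P DD = P"

fun SY :: "real \<Rightarrow> real \<Rightarrow> outcome \<Rightarrow> real" where
  "SY R P CC = R" | "SY R P CD = 1" | "SY R P DC = 0" | "SY R P DD = P"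

text \<open>The vector (1,1,0,0).\<close>
definition e12 :: "outcome \<Rightarrow> real" where
  "e12 w = (if x_coop w then 1 else 0)"

definition memory_one :: "(outcome \<Rightarrow> real) \<Rightarrow> bool" where
  "memory_one p \<longleftrightarrow> (\<forall>w. 0 \<le> p w \<and> p w \<le> 1)"

text \<open>A strategy pattern for Y: a behaviour strategy giving, for each history of
  previous outcomes (oldest first), the probability that Y cooperates.\<close>
definition strategy_pattern :: "(outcome list \<Rightarrow> real) \<Rightarrow> bool" where
  "strategy_pattern q \<longleftrightarrow> (\<forall>h. 0 \<le> q h \<and> q h \<le> 1)"

text \<open>Probability of outcome w in the next round given history h; X plays p
  (first-round cooperation probability p0), Y plays q; moves are chosen independently
  given the history.\<close>
definition round_prob ::
  "(outcome \<Rightarrow> real) \<Rightarrow> real \<Rightarrow> (outcome list \<Rightarrow> real) \<Rightarrow> outcome list \<Rightarrow> outcome \<Rightarrow> real" where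
  "round_prob p p0 q h w =
     (let a = (if h = [] then p0 else p (last h)); b = q h
      in (if x_coop w then a else 1 - a) * (if y_coop w then b else 1 - b))"

definition hist_prob ::
  "(outcome \<Rightarrow> real) \<Rightarrow> real \<Rightarrow> (outcome list \<Rightarrow> real) \<Rightarrow> outcome list \<Rightarrow> real" where
  "hist_prob p p0 q h = (\<Prod>k<length h. round_prob p p0 q (take k h) (h ! k))"

text \<open>Distribution of the outcome of round n (rounds numbered from 1).\<close>
definition round_dist ::
  "(outcome \<Rightarrow> real) \<Rightarrow> real \<Rightarrow> (outcome list \<Rightarrow> real) \<Rightarrow> nat \<Rightarrow> outcome \<Rightarrow> real" where
  "round_dist p p0 q n w =
     (\<Sum>h\<in>{h. length h = n - 1}. hist_prob p p0 q h * round_prob p p0 q h w)"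

definition cesaro ::
  "(outcome \<Rightarrow> real) \<Rightarrow> real \<Rightarrow> (outcome list \<Rightarrow> real) \<Rightarrow> nat \<Rightarrow> outcome \<Rightarrow> real" where
  "cesaro p p0 q n w = (\<Sum>k=1..n. round_dist p p0 q k w) / real n"

text \<open>v is a limit distribution: a limit point of the Cesaro averages (n \<ge> 1).\<close>
definition limit_dist ::
  "(outcome \<Rightarrow> real) \<Rightarrow> real \<Rightarrow> (outcome list \<Rightarrow> real) \<Rightarrow> (outcome \<Rightarrow> real) \<Rightarrow> bool" where
  "limit_dist p p0 q v \<longleftrightarrow>
     (\<exists>r::nat \<Rightarrow> nat. strict_mono r \<and>
        (\<forall>w. (\<lambda>j. cesaro p p0 q (Suc (r j)) w) \<longlonglongrightarrow> v w))"

definition expected :: "(outcome \<Rightarrow> real) \<Rightarrow> (outcome \<Rightarrow> real) \<Rightarrow> real" where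
  "expected v S = v CC * S CC + v CD * S CD + v DC * S DC + v DD * S DD"

end

theory Submission
  imports Defs
begin

text \<open>Akin's lemma: since X's cooperation probability in round n+1 is the mean of p under the
  outcome distribution of round n, the drift of p - (1,1,0,0) telescopes along the Cesaro averages
  and vanishes at every limit distribution. For the zero-determinant strategy this gives the linear
  relation \<open>\<alpha> s\<^sub>X + \<beta> s\<^sub>Y + 1 = 0\<close>, i.e.
  \<open>s\<^sub>Y - Z = \<alpha>Z (s\<^sub>X - s\<^sub>Y)\<close> and \<open>s\<^sub>X - Z = (1 + \<alpha>Z)(s\<^sub>X - s\<^sub>Y)\<close>.
  As \<open>p\<close> is a probability vector, \<open>Z > 0\<close> and \<open>1 + \<alpha>Z > 0\<close>, so the order of
  \<open>s\<^sub>X, s\<^sub>Y, Z\<close> is read off from the signs of \<open>s\<^sub>X - s\<^sub>Y\<close> and \<open>\<alpha>\<close>.\<close>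

lemma UNIV_outcome: "(UNIV :: outcome set) = {CC, CD, DC, DD}"
  using outcome.exhaust by blast

lemma finite_UNIV_outcome [simp]: "finite (UNIV :: outcome set)"
  by (simp add: UNIV_outcome)

lemma sum_UNIV_outcome: "(\<Sum>w\<in>UNIV. f w) = f CC + f CD + f DC + f DD"
  by (simp add: UNIV_outcome add.assoc)

lemma sum_lists_length_Suc:
  fixes f :: "'a list \<Rightarrow> 'b :: comm_monoid_add"
  assumes "finite (UNIV :: 'a set)"
  shows "(\<Sum>h\<in>{h. length h = Suc n}. f h) = (\<Sum>h\<in>{h. length h = n}. \<Sum>w\<in>UNIV. f (h @ [w]))"
proof -
  have lists_Suc: "{h :: 'a list. length h = Suc n} = (\<lambda>(h, w). h @ [w]) ` ({h. length h = n} \<times> UNIV)"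
  proof (intro set_eqI iffI)
    fix h :: "'a list"
    assume "h \<in> {h. length h = Suc n}"
    then have "h = butlast h @ [last h]" "length (butlast h) = n"
      by (auto intro: append_butlast_last_id[symmetric])
    then show "h \<in> (\<lambda>(h, w). h @ [w]) ` ({h. length h = n} \<times> UNIV)"
      by (metis (mono_tags, lifting) UNIV_I mem_Collect_eq mem_Sigma_iff pair_imageI)
  qed auto
  have "inj_on (\<lambda>(h, w). h @ [w]) ({h :: 'a list. length h = n} \<times> UNIV)"
    by (auto simp: inj_on_def)
  then show ?thesis
    unfolding lists_Suc
    using assms by (simp add: sum.reindex sum.cartesian_product finite_lists_length_eq split_def)
qed

definition x_coop_prob :: "(outcome \<Rightarrow> real) \<Rightarrow> real \<Rightarrow> outcome list \<Rightarrow> real" where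
  "x_coop_prob p p0 h = (if h = [] then p0 else p (last h))"

definition coop_prob :: "(outcome \<Rightarrow> real) \<Rightarrow> real \<Rightarrow> (outcome list \<Rightarrow> real) \<Rightarrow> nat \<Rightarrow> real" where
  "coop_prob p p0 q n = (\<Sum>w\<in>UNIV. round_dist p p0 q n w * e12 w)"

lemma sum_round_prob: "(\<Sum>w\<in>UNIV. round_prob p p0 q h w) = 1"
  by (simp add: sum_UNIV_outcome round_prob_def Let_def algebra_simps)

lemma sum_round_prob_e12: "(\<Sum>w\<in>UNIV. round_prob p p0 q h w * e12 w) = x_coop_prob p p0 h"
  by (simp add: sum_UNIV_outcome round_prob_def Let_def e12_def x_coop_prob_def algebra_simps)

lemma hist_prob_snoc: "hist_prob p p0 q (h @ [w]) = hist_prob p p0 q h * round_prob p p0 q h w"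
  by (simp add: hist_prob_def prod.lessThan_Suc nth_append)

lemma sum_hist_prob: "(\<Sum>h\<in>{h. length h = n}. hist_prob p p0 q h) = 1"
proof (induction n)
  case 0
  have "{h :: outcome list. length h = 0} = {[]}" by auto
  then show ?case by (simp add: hist_prob_def)
next
  case (Suc n)
  then show ?case
    by (simp add: sum_lists_length_Suc[OF finite_UNIV_outcome] hist_prob_snoc sum_round_prob flip: sum_distrib_left)
qed

lemma sum_round_dist: "(\<Sum>w\<in>UNIV. round_dist p p0 q n w) = 1"
  unfolding round_dist_def
  by (subst sum.swap) (simp add: sum_round_prob sum_hist_prob flip: sum_distrib_left)

lemma coop_prob_Suc:
  "coop_prob p p0 q (Suc n) = (\<Sum>h\<in>{h. length h = n}. hist_prob p p0 q h * x_coop_prob p p0 h)"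
  unfolding coop_prob_def round_dist_def
  by (simp add: sum_distrib_right mult.assoc sum_round_prob_e12
      flip: sum_distrib_left sum.swap[of _ UNIV])

text \<open>X reacts to the previous outcome with \<open>p\<close>, so the mean of \<open>p\<close> over round \<open>n\<close> is
  X's cooperation probability in round \<open>n + 1\<close>.\<close>
lemma sum_round_dist_p:
  "(\<Sum>w\<in>UNIV. round_dist p p0 q (Suc n) w * p w) = coop_prob p p0 q (Suc (Suc n))"
proof -
  have "coop_prob p p0 q (Suc (Suc n))
      = (\<Sum>h\<in>{h. length h = n}. \<Sum>w\<in>UNIV. hist_prob p p0 q h * round_prob p p0 q h w * p w)"
    by (simp add: coop_prob_Suc sum_lists_length_Suc[OF finite_UNIV_outcome] hist_prob_snoc x_coop_prob_def)
  also have "\<dots> = (\<Sum>w\<in>UNIV. round_dist p p0 q (Suc n) w * p w)"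
    by (simp add: round_dist_def sum_distrib_right flip: sum.swap[of _ UNIV])
  finally show ?thesis by simp
qed

lemma coop_prob_bounds:
  assumes "memory_one p" "0 \<le> p0" "p0 \<le> 1" "strategy_pattern q"
  shows "0 \<le> coop_prob p p0 q (Suc n)" "coop_prob p p0 q (Suc n) \<le> 1"
proof -
  have x: "0 \<le> x_coop_prob p p0 h" "x_coop_prob p p0 h \<le> 1" for h
    using assms by (auto simp: x_coop_prob_def memory_one_def)
  have "0 \<le> round_prob p p0 q h w" for h w
    using assms unfolding round_prob_def Let_def memory_one_def strategy_pattern_def
    by (intro mult_nonneg_nonneg) auto
  then have hist: "0 \<le> hist_prob p p0 q h" for h
    by (simp add: hist_prob_def prod_nonneg)
  show "0 \<le> coop_prob p p0 q (Suc n)"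
    by (simp add: coop_prob_Suc sum_nonneg hist x)
  have "coop_prob p p0 q (Suc n) \<le> (\<Sum>h\<in>{h. length h = n}. hist_prob p p0 q h)"
    unfolding coop_prob_Suc by (intro sum_mono) (simp add: hist x mult_left_le)
  then show "coop_prob p p0 q (Suc n) \<le> 1"
    by (simp add: sum_hist_prob)
qed

lemma sum_cesaro: "(\<Sum>w\<in>UNIV. cesaro p p0 q (Suc N) w) = 1"
proof -
  have "(\<Sum>w\<in>UNIV. \<Sum>k=1..Suc N. round_dist p p0 q k w) = real (Suc N)"
    by (subst sum.swap) (simp add: sum_round_dist)
  then show ?thesis
    by (simp add: cesaro_def flip: sum_divide_distrib)
qed

lemma sum_cesaro_drift:
  "(\<Sum>w\<in>UNIV. cesaro p p0 q (Suc N) w * (p w - e12 w))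
   = (coop_prob p p0 q (Suc (Suc N)) - coop_prob p p0 q 1) / real (Suc N)"
proof -
  have drift: "(\<Sum>w\<in>UNIV. round_dist p p0 q k w * (p w - e12 w))
      = coop_prob p p0 q (Suc k) - coop_prob p p0 q k" if k: "1 \<le> k" for k
  proof -
    obtain m where "k = Suc m" using k by (cases k) auto
    then show ?thesis
      using sum_round_dist_p[of p p0 q m]
      by (simp add: right_diff_distrib sum_subtractf coop_prob_def)
  qed
  have "(\<Sum>w\<in>UNIV. cesaro p p0 q (Suc N) w * (p w - e12 w))
      = (\<Sum>k=1..Suc N. \<Sum>w\<in>UNIV. round_dist p p0 q k w * (p w - e12 w)) / real (Suc N)"
    unfolding cesaro_def times_divide_eq_left sum_distrib_right
    by (subst sum.swap) (simp add: sum_divide_distrib)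
  also have "\<dots> = (\<Sum>k=1..Suc N. coop_prob p p0 q (Suc k) - coop_prob p p0 q k) / real (Suc N)"
    by (simp add: drift)
  also have "\<dots> = (coop_prob p p0 q (Suc (Suc N)) - coop_prob p p0 q 1) / real (Suc N)"
    by (subst sum_Suc_diff) auto
  finally show ?thesis .
qed

lemma cesaro_drift_tendsto_0:
  assumes "memory_one p" "0 \<le> p0" "p0 \<le> 1" "strategy_pattern q"
  shows "(\<lambda>N. \<Sum>w\<in>UNIV. cesaro p p0 q (Suc N) w * (p w - e12 w)) \<longlonglongrightarrow> 0"
proof (rule tendsto_0_le[where f = "\<lambda>N. inverse (real (Suc N))" and K = 1])
  show "(\<lambda>N. inverse (real (Suc N))) \<longlonglongrightarrow> 0"
    by (rule LIMSEQ_inverse_real_of_nat)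
  have "norm (\<Sum>w\<in>UNIV. cesaro p p0 q (Suc N) w * (p w - e12 w)) \<le> inverse (real (Suc N))" for N
  proof -
    have "\<bar>coop_prob p p0 q (Suc (Suc N)) - coop_prob p p0 q 1\<bar> \<le> 1"
      using coop_prob_bounds[OF assms, of "Suc N"] coop_prob_bounds[OF assms, of 0] by simp
    then show ?thesis
      by (simp add: sum_cesaro_drift abs_divide divide_right_mono divide_inverse_commute abs_mult
          mult_left_le)
  qed
  then show "\<forall>\<^sub>F N in sequentially.
      norm (\<Sum>w\<in>UNIV. cesaro p p0 q (Suc N) w * (p w - e12 w)) \<le> norm (inverse (real (Suc N))) * 1"
    by simp
qed

lemma limit_dist_drift_eq_0:
  assumes "memory_one p" "0 \<le> p0" "p0 \<le> 1" "strategy_pattern q" "limit_dist p p0 q v"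
  shows "(\<Sum>w\<in>UNIV. v w * (p w - e12 w)) = 0" and "(\<Sum>w\<in>UNIV. v w) = 1"
proof -
  obtain r where r: "strict_mono r" "\<And>w. (\<lambda>j. cesaro p p0 q (Suc (r j)) w) \<longlonglongrightarrow> v w"
    using assms(5) unfolding limit_dist_def by blast
  have "(\<lambda>j. \<Sum>w\<in>UNIV. cesaro p p0 q (Suc (r j)) w * (p w - e12 w))
      \<longlonglongrightarrow> (\<Sum>w\<in>UNIV. v w * (p w - e12 w))"
    by (intro tendsto_intros r(2))
  moreover have "(\<lambda>j. \<Sum>w\<in>UNIV. cesaro p p0 q (Suc (r j)) w * (p w - e12 w)) \<longlonglongrightarrow> 0"
    using LIMSEQ_subseq_LIMSEQ[OF cesaro_drift_tendsto_0[OF assms(1-4)] r(1)]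
    by (simp add: comp_def)
  ultimately show "(\<Sum>w\<in>UNIV. v w * (p w - e12 w)) = 0"
    by (rule LIMSEQ_unique)
  have "(\<lambda>j. \<Sum>w\<in>UNIV. cesaro p p0 q (Suc (r j)) w) \<longlonglongrightarrow> (\<Sum>w\<in>UNIV. v w)"
    by (intro tendsto_sum r(2))
  then show "(\<Sum>w\<in>UNIV. v w) = 1"
    by (simp add: sum_cesaro LIMSEQ_const_iff)
qed

lemma expected_zd_relation:
  assumes drift: "(\<Sum>w\<in>UNIV. v w * (p w - e12 w)) = 0" and mass: "(\<Sum>w\<in>UNIV. v w) = 1"
    and zd: "\<forall>w. p w - e12 w = \<gamma> * (\<alpha> * S w + \<beta> * T w + 1)" and "\<gamma> \<noteq> 0"
  shows "\<alpha> * expected v S + \<beta> * expected v T + 1 = 0"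
proof -
  have "\<gamma> * (\<alpha> * expected v S + \<beta> * expected v T + (\<Sum>w\<in>UNIV. v w))
      = (\<Sum>w\<in>UNIV. v w * (p w - e12 w))"
    by (simp add: zd expected_def sum_UNIV_outcome algebra_simps)
  then show ?thesis
    using drift mass \<open>\<gamma> \<noteq> 0\<close> by simp
qed

text \<open>The constraints \<open>p(DC) \<ge> 0\<close> and \<open>p(CC) \<le> 1\<close> on a zero-determinant strategy.\<close>
lemma zd_coefficient_bounds:
  assumes "memory_one p" and zd: "\<forall>w. p w - e12 w = \<gamma> * (\<alpha> * SX R P w + \<beta> * SY R P w + 1)"
    and "0 < \<gamma>"
  shows "-1 \<le> \<alpha>" and "(\<alpha> + \<beta>) * R \<le> -1"
proof -
  have "0 \<le> p DC" "p CC \<le> 1"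
    using \<open>memory_one p\<close> by (auto simp: memory_one_def)
  moreover have "p DC = \<gamma> * (\<alpha> + 1)" "p CC - 1 = \<gamma> * ((\<alpha> + \<beta>) * R + 1)"
    using zd[rule_format, of DC] zd[rule_format, of CC] by (simp_all add: e12_def algebra_simps)
  ultimately have "0 \<le> \<gamma> * (\<alpha> + 1)" "\<gamma> * ((\<alpha> + \<beta>) * R + 1) \<le> 0"
    by simp_all
  with \<open>0 < \<gamma>\<close> show "-1 \<le> \<alpha>" "(\<alpha> + \<beta>) * R \<le> -1"
    by (simp_all add: zero_le_mult_iff mult_le_0_iff)
qed

lemma payoff_order_from_relation:
  fixes \<alpha> Z sX sY :: real
  assumes Z: "0 < Z" and slope: "0 < 1 + \<alpha> * Z"
    and rel: "sY - Z = \<alpha> * Z * (sX - sY)"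
  shows "(\<alpha> = 0 \<longrightarrow> sY = Z)
       \<and> (\<alpha> \<noteq> 0 \<longrightarrow> ((sY = sX \<longleftrightarrow> sY = Z) \<and> (sY = Z \<longleftrightarrow> sX = Z)))
       \<and> (sY > sX \<longrightarrow>
            (\<alpha> > 0 \<longrightarrow> Z > sY \<and> sY > sX)
          \<and> (\<alpha> = 0 \<longrightarrow> Z = sY \<and> sY > sX)
          \<and> (\<alpha> < 0 \<longrightarrow> sY > Z \<and> Z > sX))
       \<and> (sX > sY \<longrightarrow>
            (\<alpha> > 0 \<longrightarrow> sX > sY \<and> sY > Z)
          \<and> (\<alpha> = 0 \<longrightarrow> sX > sY \<and> sY = Z)
          \<and> (\<alpha> < 0 \<longrightarrow> sX > Z \<and> Z > sY))"
proof -
  have "sX - Z = (1 + \<alpha> * Z) * (sX - sY)"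
    using rel by (simp add: algebra_simps)
  then have sgn_X: "sgn (sX - Z) = sgn (sX - sY)"
    using slope by (simp add: sgn_mult)
  have sgn_Y: "sgn (sY - Z) = sgn \<alpha> * sgn (sX - sY)"
    using Z by (simp add: rel sgn_mult)
  show ?thesis
    using sgn_X sgn_Y by (auto simp: sgn_if split: if_splits)
qed

lemma zd_level_bounds:
  fixes \<alpha> \<beta> R Z :: real
  assumes "0 < R" "R < 1" "-1 \<le> \<alpha>" "(\<alpha> + \<beta>) * R \<le> -1" and Zdef: "- (1 / Z) = \<alpha> + \<beta>"
  shows "0 < Z" and "(\<alpha> + \<beta>) * Z = -1" and "0 < 1 + \<alpha> * Z"
proof -
  have "\<alpha> + \<beta> < 0"
    using assms(1,4) by (smt (verit) mult_nonneg_nonneg[of "\<alpha> + \<beta>" R])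
  with Zdef have "0 < 1 / Z"
    by linarith
  then show Z: "0 < Z"
    by simp
  with Zdef show ab_Z: "(\<alpha> + \<beta>) * Z = -1"
    by (simp add: field_simps)
  with assms(4) \<open>\<alpha> + \<beta> < 0\<close> have "Z \<le> R"
    by (smt (verit) mult_le_cancel_left)
  moreover have "- Z \<le> \<alpha> * Z"
    using mult_right_mono[OF \<open>-1 \<le> \<alpha>\<close>, of Z] Z by simp
  ultimately show "0 < 1 + \<alpha> * Z"
    using \<open>R < 1\<close> by linarith
qed

theorem corollary3p3:
  fixes R P \<gamma> \<alpha> \<beta> Z p0 :: real
    and p :: "outcome \<Rightarrow> real"
    and q :: "outcome list \<Rightarrow> real"
    and v :: "outcome \<Rightarrow> real"
  assumes payoffs: "0 < P" "P < R" "R < 1" "2 * R > 1"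
    and mem1: "memory_one p"
    and zd: "\<forall>w. p w - e12 w = \<gamma> * (\<alpha> * SX R P w + \<beta> * SY R P w + 1)"
    and gpos: "\<gamma> > 0"
    and Zdef: "- (1 / Z) = \<alpha> + \<beta>"
    and p0: "0 \<le> p0" "p0 \<le> 1"
    and Ystrat: "strategy_pattern q"
    and lim: "limit_dist p p0 q v"
  defines "sX \<equiv> expected v (SX R P)" and "sY \<equiv> expected v (SY R P)"
  shows "(\<alpha> = 0 \<longrightarrow> sY = Z)
       \<and> (\<alpha> \<noteq> 0 \<longrightarrow> ((sY = sX \<longleftrightarrow> sY = Z) \<and> (sY = Z \<longleftrightarrow> sX = Z)))
       \<and> (sY > sX \<longrightarrow>
            (\<alpha> > 0 \<longrightarrow> Z > sY \<and> sY > sX)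
          \<and> (\<alpha> = 0 \<longrightarrow> Z = sY \<and> sY > sX)
          \<and> (\<alpha> < 0 \<longrightarrow> sY > Z \<and> Z > sX))
       \<and> (sX > sY \<longrightarrow>
            (\<alpha> > 0 \<longrightarrow> sX > sY \<and> sY > Z)
          \<and> (\<alpha> = 0 \<longrightarrow> sX > sY \<and> sY = Z)
          \<and> (\<alpha> < 0 \<longrightarrow> sX > Z \<and> Z > sY))"
proof (rule payoff_order_from_relation)
  have linear: "\<alpha> * sX + \<beta> * sY + 1 = 0"
    unfolding sX_def sY_def using gpos
    by (intro expected_zd_relation[OF limit_dist_drift_eq_0[OF mem1 p0 Ystrat lim] zd]) simp
  have "0 < R"
    using payoffs by simp
  note level = zd_level_bounds[OF this \<open>R < 1\<close> zd_coefficient_bounds[OF mem1 zd gpos] Zdef]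
  show "0 < Z" "0 < 1 + \<alpha> * Z"
    using level by simp_all
  have "Z * (\<alpha> * sX + \<beta> * sY + 1) = \<alpha> * Z * (sX - sY) + (\<alpha> + \<beta>) * Z * sY + Z"
    by (simp add: algebra_simps)
  with linear level(2) show "sY - Z = \<alpha> * Z * (sX - sY)"
    by simp
qed

end
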